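(* Let $k\ge 0$ and let $A$ be a real symmetric matrix indexed by $\mathcal{F}'_k$. Then there exists an isolate-indifferent, reflection positive graph parameter $f$ with $A_{F,G}=f(FG)$ for all $F,G\in\mathcal{F}'_k$ if and only if for every $m\ge k$ there exists a positive semidefinite matrix $B$ indexed by $\mathcal{F}'_m$ such that $B_{F_1,G_1}=B_{F_2,G_2}$ whenever $F_1G_1\simeq F_2G_2$, and $B_{F^{+m},G^{+m}}=A_{F,G}$ for all $F,G\in\mathcal{F}'_k$.
   Context: All graphs are finite and simple. $\mathcal{F}'_k$ denotes the set of flat $k$-labeled graphs, i.e. graphs on node set $[k]=\{1,\dots,k\}$ with node $i$ labeled $i$. For $F,G\in\mathcal{F}'_k$, $FG$ is the graph on $[k]$ with edge set $E(F)\cup E(G)$. For $F\in\mathcal{F}'_k$ and $m\ge k$, $F^{+m}\in\mathcal{F}'_m$ is obtained by adding isolated nodes $k+1,\dots,m$. For graphs $F,G$, $F\simeq G$ means they become isomorphic after deleting isolated nodes. A graph parameter is a real function on isomorphism types of graphs; it is isolate-indifferent if $f(G)=f(G')$ whenever $G\simeq G'$. A $k$-labeled graph is a graph with $k$ nodes labeled $1,\dots,k$ (other nodes unlabeled); the product of two $k$-labeled graphs is their disjoint union with equally labeled nodes identified and multiple edges merged. $f$ is reflection positive if for every $k$ the matrix indexed by $k$-labeled graphs with entries $f(F_1F_2)$ is positive semidefinite (all finite principal submatrices PSD). *)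

theory Defs
  imports Complex_Main
begin

text \<open>A graph is a pair (V, E) of a node set V of naturals and an edge set E,
  each edge being a 2-element subset of V. Finite simple graphs are the well-formed ones.\<close>
type_synonym graph = "nat set \<times> nat set set"

definition wf_graph :: "graph \<Rightarrow> bool" where
  "wf_graph G \<longleftrightarrow> finite (fst G) \<and> (\<forall>e\<in>snd G. e \<subseteq> fst G \<and> card e = 2)"

definition graph_iso :: "graph \<Rightarrow> graph \<Rightarrow> bool" where
  "graph_iso G H \<longleftrightarrow> (\<exists>\<phi>. bij_betw \<phi> (fst G) (fst H) \<and> (image \<phi>) ` snd G = snd H)"

definition del_isolated :: "graph \<Rightarrow> graph" where
  "del_isolated G = (\<Union>(snd G), snd G)"

definition isolate_equiv :: "graph \<Rightarrow> graph \<Rightarrow> bool" where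
  "isolate_equiv G H \<longleftrightarrow> graph_iso (del_isolated G) (del_isolated H)"

definition graph_parameter :: "(graph \<Rightarrow> real) \<Rightarrow> bool" where
  "graph_parameter f \<longleftrightarrow> (\<forall>G H. wf_graph G \<and> wf_graph H \<and> graph_iso G H \<longrightarrow> f G = f H)"

definition isolate_indifferent :: "(graph \<Rightarrow> real) \<Rightarrow> bool" where
  "isolate_indifferent f \<longleftrightarrow> (\<forall>G H. wf_graph G \<and> wf_graph H \<and> isolate_equiv G H \<longrightarrow> f G = f H)"

text \<open>k-labeled graph: node i carries label i for 1 \<le> i \<le> k; other nodes are unlabeled.\<close>
definition klabeled :: "nat \<Rightarrow> graph \<Rightarrow> bool" where
  "klabeled k G \<longleftrightarrow> wf_graph G \<and> {1..k} \<subseteq> fst G"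

text \<open>Product of k-labeled graphs: disjoint union (unlabeled nodes of the two factors are
  renamed apart), equally labeled nodes identified, multiple edges merged.\<close>
definition lab_ren1 :: "nat \<Rightarrow> nat \<Rightarrow> nat" where
  "lab_ren1 k v = (if v \<in> {1..k} then v else k + 1 + 2 * v)"
definition lab_ren2 :: "nat \<Rightarrow> nat \<Rightarrow> nat" where
  "lab_ren2 k v = (if v \<in> {1..k} then v else k + 2 + 2 * v)"

definition klab_prod :: "nat \<Rightarrow> graph \<Rightarrow> graph \<Rightarrow> graph" where
  "klab_prod k F G =
     (lab_ren1 k ` fst F \<union> lab_ren2 k ` fst G,
      (image (lab_ren1 k)) ` snd F \<union> (image (lab_ren2 k)) ` snd G)"

definition psd_on :: "'a set \<Rightarrow> ('a \<Rightarrow> 'a \<Rightarrow> real) \<Rightarrow> bool" where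
  "psd_on S M \<longleftrightarrow> (\<forall>x\<in>S. \<forall>y\<in>S. M x y = M y x) \<and>
     (\<forall>T c. finite T \<and> T \<subseteq> S \<longrightarrow> 0 \<le> (\<Sum>x\<in>T. \<Sum>y\<in>T. c x * c y * M x y))"

definition reflection_positive :: "(graph \<Rightarrow> real) \<Rightarrow> bool" where
  "reflection_positive f \<longleftrightarrow>
     (\<forall>k. psd_on {F. klabeled k F} (\<lambda>F G. f (klab_prod k F G)))"

definition flat_graphs :: "nat \<Rightarrow> graph set" where
  "flat_graphs k = {G. fst G = {1..k} \<and> wf_graph G}"

definition flat_prod :: "graph \<Rightarrow> graph \<Rightarrow> graph" where
  "flat_prod F G = (fst F, snd F \<union> snd G)"

definition add_isolated :: "nat \<Rightarrow> graph \<Rightarrow> graph" where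
  "add_isolated m F = ({1..m}, snd F)"

end

theory Submission
  imports Defs "HOL-Analysis.Analysis"
begin

(*
  Forward direction: put B F G = f(FG) on flat m-labeled graphs.  For graphs on the node
  set [m] the m-labeled product is the flat product, so B is a principal submatrix of the
  m-th connection matrix of f, hence positive semidefinite; isolate-indifference of f makes
  B consistent under isolate-equivalence, and padding with isolated nodes recovers A.

  Backward direction: a matrix B_m for level m induces a function f_m on graphs,
  f_m(H) = B_m(X,X) for any flat X that is isolate-equivalent to H (and 0 otherwise).
  Embedding k'-labeled graphs into N disjoint "slots" of the node set [m] turns positive
  semidefiniteness of B_m into the inequality (N-1) Q + Q' >= 0, where Q is a quadratic form
  of the k'-th connection matrix of f_m and Q' the same form evaluated on overlays.  These inequalities, together with isolate-
  indifference, symmetry and agreement with A, describe closed sets D_m of functions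
  graph => real that shrink as m grows; f_n lies in D_m for n >= m and all f_m lie in a
  compact box.  By compactness some f lies in every D_m, and letting N grow gives Q >= 0,
  i.e. f is reflection positive.
*)

lemma isolate_equiv_iff_edges:
  "isolate_equiv G H \<longleftrightarrow> isolate_equiv (V, snd G) (W, snd H)"
  by (simp add: isolate_equiv_def del_isolated_def)

lemma isolate_equiv_refl: "isolate_equiv G G"
  unfolding isolate_equiv_def graph_iso_def by (rule exI[of _ id]) (auto simp: bij_betw_def)

lemma isolate_equiv_same_edges: "snd G = snd H \<Longrightarrow> isolate_equiv G H"
  using isolate_equiv_refl isolate_equiv_iff_edges by (metis prod.collapse)

lemma isolate_equiv_sym:
  assumes "isolate_equiv G H"
  shows "isolate_equiv H G"
proof -
  from assms obtain \<phi> where bij: "bij_betw \<phi> (\<Union>(snd G)) (\<Union>(snd H))"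
    and edges: "image \<phi> ` snd G = snd H"
    by (auto simp: isolate_equiv_def graph_iso_def del_isolated_def)
  let ?\<psi> = "inv_into (\<Union>(snd G)) \<phi>"
  have "bij_betw ?\<psi> (\<Union>(snd H)) (\<Union>(snd G))"
    using bij by (rule bij_betw_inv_into)
  moreover have "image ?\<psi> ` snd H = snd G"
  proof -
    have "\<And>e. e \<in> snd G \<Longrightarrow> ?\<psi> ` \<phi> ` e = e"
      using bij by (intro inv_into_image_cancel) (auto simp: bij_betw_def)
    then show ?thesis
      unfolding edges[symmetric] image_image by simp
  qed
  ultimately show ?thesis
    by (auto simp: isolate_equiv_def graph_iso_def del_isolated_def)
qed

lemma isolate_equiv_trans:
  assumes "isolate_equiv G H" "isolate_equiv H K"
  shows "isolate_equiv G K"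
proof -
  from assms obtain \<phi> \<psi> where
    bij1: "bij_betw \<phi> (\<Union>(snd G)) (\<Union>(snd H))" and edges1: "image \<phi> ` snd G = snd H" and
    bij2: "bij_betw \<psi> (\<Union>(snd H)) (\<Union>(snd K))" and edges2: "image \<psi> ` snd H = snd K"
    by (auto simp: isolate_equiv_def graph_iso_def del_isolated_def)
  have "bij_betw (\<psi> \<circ> \<phi>) (\<Union>(snd G)) (\<Union>(snd K))"
    using bij1 bij2 by (rule bij_betw_trans)
  moreover have "image (\<psi> \<circ> \<phi>) ` snd G = snd K"
    unfolding edges2[symmetric] edges1[symmetric] by (simp add: image_image image_comp)
  ultimately show ?thesis
    unfolding isolate_equiv_def graph_iso_def del_isolated_def
    by (intro exI[of _ "\<psi> \<circ> \<phi>"]) simp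
qed

lemma isolate_equiv_relabel:
  assumes "inj_on h (\<Union>E)"
  shows "isolate_equiv (V, E) (W, image h ` E)"
proof -
  have "bij_betw h (\<Union>E) (\<Union>(image h ` E))"
    using assms by (auto simp: bij_betw_def)
  then show ?thesis
    by (auto simp: isolate_equiv_def graph_iso_def del_isolated_def)
qed

text \<open>Isomorphic simple graphs are isolate-equivalent, so isolate-indifferent functions
  are graph parameters.\<close>

lemma graph_iso_imp_isolate_equiv:
  assumes "wf_graph G" "graph_iso G H"
  shows "isolate_equiv G H"
proof -
  from assms obtain \<phi> where bij: "bij_betw \<phi> (fst G) (fst H)" and edges: "image \<phi> ` snd G = snd H"
    by (auto simp: graph_iso_def)
  have "\<Union>(snd G) \<subseteq> fst G"
    using assms(1) by (auto simp: wf_graph_def)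
  then have "inj_on \<phi> (\<Union>(snd G))"
    using bij by (auto simp: bij_betw_def intro: inj_on_subset)
  then have "isolate_equiv (fst G, snd G) (fst H, image \<phi> ` snd G)"
    by (rule isolate_equiv_relabel)
  then show ?thesis
    using edges by simp
qed

lemma flat_prod_flat:
  "X \<in> flat_graphs m \<Longrightarrow> Y \<in> flat_graphs m \<Longrightarrow> flat_prod X Y \<in> flat_graphs m"
  unfolding flat_graphs_def flat_prod_def wf_graph_def
  by (simp only: mem_Collect_eq fst_conv snd_conv) blast

lemma flat_prod_self: "flat_prod X X = X"
  by (simp add: flat_prod_def)

lemma add_isolated_flat:
  "F \<in> flat_graphs k \<Longrightarrow> k \<le> m \<Longrightarrow> add_isolated m F \<in> flat_graphs m"
  unfolding flat_graphs_def add_isolated_def wf_graph_def by force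

lemma isolate_equiv_add_isolated:
  "isolate_equiv (flat_prod (add_isolated m F) (add_isolated m G)) (flat_prod F G)"
  by (rule isolate_equiv_same_edges) (simp add: flat_prod_def add_isolated_def)

text \<open>On graphs with node set [m] the m-labeled product is the flat product, since every
  node is labeled and the renamings of the product are the identity on labels.\<close>

lemma klab_prod_flat:
  assumes "F \<in> flat_graphs m" "G \<in> flat_graphs m"
  shows "klab_prod m F G = flat_prod F G"
proof -
  have ren: "lab_ren1 m ` X = X" "lab_ren2 m ` X = X" if "X \<subseteq> {1..m}" for X
    using that by (force simp: lab_ren1_def lab_ren2_def)+
  have edges: "\<forall>e\<in>snd F. e \<subseteq> {1..m}" "\<forall>e\<in>snd G. e \<subseteq> {1..m}"
    and nodes: "fst F = {1..m}" "fst G = {1..m}"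
    using assms unfolding flat_graphs_def wf_graph_def by blast+
  have "image (lab_ren1 m) ` snd F = snd F" "image (lab_ren2 m) ` snd G = snd G"
    using edges ren by (auto simp: image_iff)
  then show ?thesis
    using nodes ren by (simp add: klab_prod_def flat_prod_def)
qed

lemma psd_on_quadratic_nonneg:
  "psd_on S M \<Longrightarrow> finite T \<Longrightarrow> T \<subseteq> S \<Longrightarrow> 0 \<le> (\<Sum>x\<in>T. \<Sum>y\<in>T. c x * c y * M x y)"
  unfolding psd_on_def by blast

text \<open>Pulling a positive semidefinite matrix back along an arbitrary (not necessarily
  injective) map g keeps its quadratic forms nonnegative: coefficients of points with the
  same image are merged.\<close>

lemma psd_quadratic_reindex:
  assumes "psd_on S B" "finite I" "g ` I \<subseteq> S"
  shows "0 \<le> (\<Sum>x\<in>I. \<Sum>y\<in>I. c x * c y * B (g x) (g y))"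
proof -
  define d where "d z = (\<Sum>x\<in>{x\<in>I. g x = z}. c x)" for z
  have inner: "(\<Sum>y\<in>I. c x * c y * B (g x) (g y)) = (\<Sum>w\<in>g ` I. c x * d w * B (g x) w)" for x
  proof -
    have "(\<Sum>y\<in>I. c x * c y * B (g x) (g y))
        = (\<Sum>w\<in>g ` I. \<Sum>y\<in>{y\<in>I. g y = w}. c x * c y * B (g x) (g y))"
      by (rule sum.image_gen[OF assms(2)])
    also have "\<dots> = (\<Sum>w\<in>g ` I. \<Sum>y\<in>{y\<in>I. g y = w}. c x * c y * B (g x) w)"
      by (intro sum.cong) auto
    also have "\<dots> = (\<Sum>w\<in>g ` I. c x * d w * B (g x) w)"
      by (simp add: d_def sum_distrib_left sum_distrib_right mult.assoc)
    finally show ?thesis .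
  qed
  have "(\<Sum>x\<in>I. \<Sum>y\<in>I. c x * c y * B (g x) (g y)) = (\<Sum>x\<in>I. \<Sum>w\<in>g ` I. c x * d w * B (g x) w)"
    using inner by simp
  also have "\<dots> = (\<Sum>z\<in>g ` I. \<Sum>x\<in>{x\<in>I. g x = z}. \<Sum>w\<in>g ` I. c x * d w * B (g x) w)"
    by (rule sum.image_gen[OF assms(2)])
  also have "\<dots> = (\<Sum>z\<in>g ` I. \<Sum>x\<in>{x\<in>I. g x = z}. \<Sum>w\<in>g ` I. c x * d w * B z w)"
    by (intro sum.cong) auto
  also have "\<dots> = (\<Sum>z\<in>g ` I. \<Sum>w\<in>g ` I. d z * d w * B z w)"
    unfolding d_def by (intro sum.cong refl, subst sum.swap) (simp add: sum_distrib_right)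
  also have "0 \<le> \<dots>"
    using assms by (auto simp: psd_on_def)
  finally show ?thesis .
qed

lemma sum_diagonal_split:
  "(\<Sum>s<N. \<Sum>t<N. (if s = t then a else b)) = real N * a + real N * (real N - 1) * (b::real)"
proof -
  have row: "(\<Sum>t<N. (if s = t then a else b)) = a + (real N - 1) * b" if "s < N" for s
  proof -
    have "(\<Sum>t<N. (if s = t then a else b)) = (\<Sum>t<N. b + (if s = t then a - b else 0))"
      by (intro sum.cong) auto
    also have "\<dots> = real N * b + (a - b)"
      using that by (simp add: sum.distrib)
    finally show ?thesis
      by (simp add: algebra_simps)
  qed
  then have "(\<Sum>s<N. \<Sum>t<N. (if s = t then a else b)) = (\<Sum>s<N. a + (real N - 1) * b)"
    by simp
  then show ?thesis
    by (simp add: algebra_simps)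
qed

lemma nonneg_of_linear_bound:
  assumes "\<forall>N\<ge>2. 0 \<le> (real N - 1) * Q + (Q'::real)"
  shows "0 \<le> Q"
proof (rule ccontr)
  assume "\<not> 0 \<le> Q"
  then have neg: "0 < - Q" by simp
  obtain n :: nat where "Q' / (- Q) < real n"
    using reals_Archimedean2 by blast
  then have "Q' < real n * (- Q)"
    using pos_divide_less_eq[OF neg] by blast
  then have "(real (n + 2) - 1) * Q + Q' < 0"
    using neg by (simp add: algebra_simps)
  moreover have "0 \<le> (real (n + 2) - 1) * Q + Q'"
    using assms[rule_format, of "n + 2"] by simp
  ultimately show False by simp
qed

section \<open>The function induced by a consistent flat matrix\<close>

definition isolate_consistent :: "nat \<Rightarrow> (graph \<Rightarrow> graph \<Rightarrow> real) \<Rightarrow> bool" where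
  "isolate_consistent m B \<longleftrightarrow>
     (\<forall>F1\<in>flat_graphs m. \<forall>G1\<in>flat_graphs m. \<forall>F2\<in>flat_graphs m. \<forall>G2\<in>flat_graphs m.
        isolate_equiv (flat_prod F1 G1) (flat_prod F2 G2) \<longrightarrow> B F1 G1 = B F2 G2)"

definition flat_extension ::
    "nat \<Rightarrow> (graph \<Rightarrow> graph \<Rightarrow> real) \<Rightarrow> nat \<Rightarrow> (graph \<Rightarrow> graph \<Rightarrow> real) \<Rightarrow> bool" where
  "flat_extension k A m B \<longleftrightarrow> psd_on (flat_graphs m) B \<and> isolate_consistent m B \<and>
     (\<forall>F\<in>flat_graphs k. \<forall>G\<in>flat_graphs k. B (add_isolated m F) (add_isolated m G) = A F G)"

definition flat_param :: "nat \<Rightarrow> (graph \<Rightarrow> graph \<Rightarrow> real) \<Rightarrow> graph \<Rightarrow> real" where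
  "flat_param m B H =
     (if \<exists>X\<in>flat_graphs m. isolate_equiv X H
      then (let X = SOME X. X \<in> flat_graphs m \<and> isolate_equiv X H in B X X) else 0)"

lemma flat_param_cases:
  "flat_param m B H = 0 \<or> (\<exists>W\<in>flat_graphs m. flat_param m B H = B W W)"
proof (cases "\<exists>X\<in>flat_graphs m. isolate_equiv X H")
  case True
  then have "(SOME X. X \<in> flat_graphs m \<and> isolate_equiv X H) \<in> flat_graphs m"
    using someI_ex[of "\<lambda>X. X \<in> flat_graphs m \<and> isolate_equiv X H"] by auto
  then show ?thesis
    using True unfolding flat_param_def Let_def by auto
qed (simp add: flat_param_def)

lemma flat_param_eq:
  assumes "isolate_consistent m B" "X \<in> flat_graphs m" "Y \<in> flat_graphs m"
    and "isolate_equiv (flat_prod X Y) H"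
  shows "flat_param m B H = B X Y"
proof -
  have ex: "\<exists>X\<in>flat_graphs m. isolate_equiv X H"
    using assms flat_prod_flat by blast
  define W where "W = (SOME X. X \<in> flat_graphs m \<and> isolate_equiv X H)"
  have W: "W \<in> flat_graphs m" "isolate_equiv W H"
    using someI_ex[of "\<lambda>X. X \<in> flat_graphs m \<and> isolate_equiv X H"] ex unfolding W_def by auto
  have "isolate_equiv (flat_prod W W) (flat_prod X Y)"
    using W(2) assms(4) isolate_equiv_sym isolate_equiv_trans flat_prod_self by metis
  then have "B W W = B X Y"
    using assms(1-3) W(1) unfolding isolate_consistent_def by blast
  then show ?thesis
    using ex unfolding flat_param_def W_def Let_def by simp
qed

lemma flat_param_isolate_equiv:
  assumes "isolate_equiv G H"
  shows "flat_param m B G = flat_param m B H"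
proof -
  have "\<And>X. isolate_equiv X G \<longleftrightarrow> isolate_equiv X H"
    using assms isolate_equiv_sym isolate_equiv_trans by metis
  then show ?thesis
    unfolding flat_param_def by simp
qed

lemma flat_param_extends:
  assumes "flat_extension k A m B" "k \<le> m" "F \<in> flat_graphs k" "G \<in> flat_graphs k"
  shows "flat_param m B (flat_prod F G) = A F G"
proof -
  have "add_isolated m F \<in> flat_graphs m" "add_isolated m G \<in> flat_graphs m"
    using add_isolated_flat assms(2-4) by auto
  then show ?thesis
    using flat_param_eq[OF _ _ _ isolate_equiv_add_isolated] assms(1,3,4)
    unfolding flat_extension_def by simp
qed

text \<open>The induced function takes values between 0 and c = A(E,E), E the empty flat graph:
  diagonal entries of a positive semidefinite matrix are nonnegative, and the 2 x 2 minor on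
  W and the empty graph E gives B(W,W) - 2 B(W,E) + B(E,E) >= 0 with B(W,E) = B(W,W).\<close>

lemma flat_param_bounded:
  assumes "flat_extension k A m B" "k \<le> m"
  shows "flat_param m B H \<in> {0..A ({1..k}, {}) ({1..k}, {})}"
proof -
  let ?c = "A ({1..k}, {}) ({1..k}, {})"
  define E :: graph where "E = ({1..m}, {})"
  have psd: "psd_on (flat_graphs m) B" and cons: "isolate_consistent m B"
    using assms(1) by (auto simp: flat_extension_def)
  have E0: "({1..k}, {}) \<in> flat_graphs k" and E: "E \<in> flat_graphs m"
    by (simp_all add: E_def flat_graphs_def wf_graph_def)
  have BE: "B E E = ?c"
    using assms(1) E0 unfolding flat_extension_def by (force simp: E_def add_isolated_def)
  have diag: "0 \<le> B W W" if "W \<in> flat_graphs m" for W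
    using psd_on_quadratic_nonneg[OF psd, of "{W}" "\<lambda>_. 1"] that by simp
  have upper: "B W W \<le> ?c" if W: "W \<in> flat_graphs m" for W
  proof (cases "W = E")
    case False
    have "flat_prod W E = W"
      using W by (auto simp: flat_prod_def E_def)
    then have WE: "B W E = B W W"
      using cons W E isolate_equiv_refl flat_prod_self unfolding isolate_consistent_def by metis
    have EW: "B E W = B W E"
      using psd W E unfolding psd_on_def by blast
    define sgn where "sgn = (\<lambda>x. if x = W then (1::real) else -1)"
    have "0 \<le> (\<Sum>x\<in>{W,E}. \<Sum>y\<in>{W,E}. sgn x * sgn y * B x y)"
      using psd_on_quadratic_nonneg[OF psd, of "{W,E}" sgn] W E by simp
    also have "\<dots> = B W W - B W E - B E W + B E E"
      using False by (simp add: sgn_def)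
    finally show ?thesis
      using WE EW BE by simp
  qed (use BE in simp)
  show ?thesis
    using flat_param_cases[of m B H] diag upper diag[OF E] BE by auto
qed

section \<open>Placing labeled graphs into slots of [m]\<close>

text \<open>The node set of a j-labeled graph is mapped into [m] by fixing the labels 1..j and
  sending an unlabeled node v to j + 1 + s + N v, i.e. into residue class s modulo N.
  Distinct slots s, t < N thus receive disjoint sets of unlabeled nodes.\<close>

definition slot_map :: "nat \<Rightarrow> nat \<Rightarrow> nat \<Rightarrow> nat \<Rightarrow> nat" where
  "slot_map j N s v = (if v \<in> {1..j} then v else j + 1 + s + N * v)"

definition slot_graph :: "nat \<Rightarrow> nat \<Rightarrow> nat \<Rightarrow> nat \<Rightarrow> graph \<Rightarrow> graph" where
  "slot_graph j N m s F = ({1..m}, image (slot_map j N s) ` snd F)"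

text \<open>Two labeled graphs laid on top of each other without renaming their unlabeled
  nodes apart; this is what the product of two graphs in the same slot looks like.\<close>

definition overlay :: "graph \<Rightarrow> graph \<Rightarrow> graph" where
  "overlay F G = (fst F \<union> fst G, snd F \<union> snd G)"

text \<open>The largest node occurring in a family of graphs, and the size of [m] needed to
  hold N slots for them.\<close>

definition max_node :: "graph set \<Rightarrow> nat" where
  "max_node T = Max (insert 0 (\<Union>(fst ` T)))"

definition slot_bound :: "nat \<Rightarrow> graph set \<Rightarrow> nat \<Rightarrow> nat" where
  "slot_bound j T N = j + N + N * max_node T"

lemma max_node_bound:
  assumes "finite T" "T \<subseteq> {F. klabeled j F}" "F \<in> T" "v \<in> fst F"
  shows "v \<le> max_node T"
proof -
  have "\<forall>F\<in>T. finite (fst F)"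
    using assms(2) by (auto simp: klabeled_def wf_graph_def)
  then show ?thesis
    unfolding max_node_def using assms(1,3,4) by (intro Max_ge) auto
qed

lemma slot_map_inj: "0 < N \<Longrightarrow> inj (slot_map j N s)"
  unfolding inj_def slot_map_def by auto

lemma slot_map_cross:
  assumes "s < N" "t < N" "s \<noteq> t" "slot_map j N s a = slot_map j N t b"
  shows "a = b \<and> a \<in> {1..j}"
proof -
  have "s + N * a \<noteq> t + N * b"
  proof
    assume "s + N * a = t + N * b"
    then have "(s + N * a) mod N = (t + N * b) mod N" by simp
    then show False using assms(1-3) by simp
  qed
  then show ?thesis
    using assms(4) unfolding slot_map_def by (auto split: if_splits)
qed

lemma slot_graph_flat:
  assumes "klabeled j F" "\<forall>v\<in>fst F. v \<le> M" "s < N" "j + N + N * M \<le> m"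
  shows "slot_graph j N m s F \<in> flat_graphs m"
proof -
  have edges: "\<forall>e\<in>snd F. e \<subseteq> fst F \<and> card e = 2"
    using assms(1) by (auto simp: klabeled_def wf_graph_def)
  have range: "slot_map j N s v \<in> {1..m}" if "v \<in> fst F" for v
  proof -
    have "N * v \<le> N * M"
      using assms(2) that by simp
    then have "j + 1 + s + N * v \<le> m"
      using assms(3,4) by linarith
    then show ?thesis
      unfolding slot_map_def by auto
  qed
  have "card (slot_map j N s ` e) = 2" if "e \<in> snd F" for e
    using edges that slot_map_inj[of N j s] assms(3)
    by (simp add: card_image inj_on_subset[of _ UNIV])
  moreover have "slot_map j N s ` e \<subseteq> {1..m}" if "e \<in> snd F" for e
    using edges that range by blast
  ultimately show ?thesis
    unfolding slot_graph_def flat_graphs_def wf_graph_def by auto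
qed

lemma slot_product_same:
  assumes "0 < N"
  shows "isolate_equiv (flat_prod (slot_graph j N m s F) (slot_graph j N m s G)) (overlay F G)"
proof -
  have "isolate_equiv (overlay F G) ({1..m}, image (slot_map j N s) ` (snd F \<union> snd G))"
    unfolding overlay_def using slot_map_inj[OF assms]
    by (intro isolate_equiv_relabel) (auto intro: inj_on_subset)
  then show ?thesis
    by (simp add: slot_graph_def flat_prod_def image_Un isolate_equiv_sym)
qed

text \<open>Map from the node set of a j-labeled product into [m] that sends the first factor
  into slot s and the second into slot t.\<close>

definition merge_map :: "nat \<Rightarrow> nat \<Rightarrow> nat \<Rightarrow> nat \<Rightarrow> nat \<Rightarrow> nat" where
  "merge_map j N s t w =
     (if w \<in> {1..j} then w
      else if even (w - j - 1) then slot_map j N s ((w - j - 1) div 2)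
      else slot_map j N t ((w - j - 2) div 2))"

lemma merge_map_ren1: "merge_map j N s t (lab_ren1 j v) = slot_map j N s v"
  unfolding merge_map_def lab_ren1_def slot_map_def by auto

lemma merge_map_ren2: "merge_map j N s t (lab_ren2 j v) = slot_map j N t v"
  unfolding merge_map_def lab_ren2_def slot_map_def by auto

lemma merge_map_inj:
  assumes "s < N" "t < N" "s \<noteq> t"
  shows "inj_on (merge_map j N s t) (range (lab_ren1 j) \<union> range (lab_ren2 j))"
proof (rule inj_onI)
  fix x y
  assume x: "x \<in> range (lab_ren1 j) \<union> range (lab_ren2 j)"
    and y: "y \<in> range (lab_ren1 j) \<union> range (lab_ren2 j)"
    and eq: "merge_map j N s t x = merge_map j N s t y"
  have same: "a = b" if "slot_map j N u a = slot_map j N u b" for u a b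
    using assms slot_map_inj[of N j u] that by (simp add: inj_eq)
  have labels: "lab_ren1 j a = a" "lab_ren2 j a = a" if "a \<in> {1..j}" for a
    using that by (auto simp: lab_ren1_def lab_ren2_def)
  have mixed: "lab_ren1 j a = lab_ren2 j b" if "slot_map j N s a = slot_map j N t b" for a b
    using slot_map_cross[OF assms that] labels by metis
  from x y eq show "x = y"
    by (elim UnE rangeE)
      (auto simp: merge_map_ren1 merge_map_ren2 dest: same mixed mixed[OF sym])
qed

lemma slot_product_distinct:
  assumes "s < N" "t < N" "s \<noteq> t"
  shows "isolate_equiv (klab_prod j F G) (flat_prod (slot_graph j N m s F) (slot_graph j N m t G))"
proof -
  let ?E = "snd (klab_prod j F G)"
  have "\<Union>?E \<subseteq> range (lab_ren1 j) \<union> range (lab_ren2 j)"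
    unfolding klab_prod_def by auto
  then have "isolate_equiv (fst (klab_prod j F G), ?E) ({1..m}, image (merge_map j N s t) ` ?E)"
    using merge_map_inj[OF assms] by (intro isolate_equiv_relabel) (auto intro: inj_on_subset)
  moreover have "image (merge_map j N s t) ` ?E
      = image (slot_map j N s) ` snd F \<union> image (slot_map j N t) ` snd G"
    unfolding klab_prod_def by (simp add: image_Un image_image merge_map_ren1 merge_map_ren2)
  ultimately show ?thesis
    by (simp add: slot_graph_def flat_prod_def)
qed

section \<open>Connection-matrix inequalities for the induced function\<close>

text \<open>Index a quadratic form of B by pairs (F, s) of a labeled graph F
  in T and a slot s < N.  Entries with equal slots are values at overlays, entries with
  distinct slots are values at labeled products, so positive semidefiniteness of B yields
  N ((N - 1) Q + Q') >= 0, where Q is the quadratic form of the labeled connection matrix.\<close>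

lemma flat_param_slot_inequality:
  assumes psd: "psd_on (flat_graphs m) B" and cons: "isolate_consistent m B"
    and T: "finite T" "T \<subseteq> {F. klabeled j F}" and N: "2 \<le> N" and m: "slot_bound j T N \<le> m"
  shows "0 \<le> (real N - 1) * (\<Sum>F\<in>T. \<Sum>G\<in>T. c F * c G * flat_param m B (klab_prod j F G))
              + (\<Sum>F\<in>T. \<Sum>G\<in>T. c F * c G * flat_param m B (overlay F G))"
    (is "0 \<le> (real N - 1) * ?Q + ?Q'")
proof -
  let ?slot = "\<lambda>s F. slot_graph j N m s F"
  let ?val = "\<lambda>s t F G. if s = t then flat_param m B (overlay F G) else flat_param m B (klab_prod j F G)"
  have flat: "?slot s F \<in> flat_graphs m" if "F \<in> T" "s < N" for s F
    using slot_graph_flat[of j F "max_node T" s N m] max_node_bound[OF T] T(2) m that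
    unfolding slot_bound_def by blast
  have entry: "B (?slot s F) (?slot t G) = ?val s t F G"
    if "F \<in> T" "G \<in> T" "s < N" "t < N" for F G s t
  proof (cases "s = t")
    case True
    then show ?thesis
      using flat_param_eq[OF cons flat flat slot_product_same] that N by simp
  next
    case False
    then show ?thesis
      using flat_param_eq[OF cons flat flat isolate_equiv_sym[OF slot_product_distinct]] that by simp
  qed
  have "0 \<le> (\<Sum>x\<in>T \<times> {..<N}. \<Sum>y\<in>T \<times> {..<N}.
              c (fst x) * c (fst y) * B (?slot (snd x) (fst x)) (?slot (snd y) (fst y)))"
    using flat T(1) by (intro psd_quadratic_reindex[OF psd]) auto
  also have "\<dots> = (\<Sum>F\<in>T. \<Sum>s<N. \<Sum>G\<in>T. \<Sum>t<N. c F * c G * ?val s t F G)"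
    by (simp add: sum.cartesian_product' entry)
  also have "\<dots> = (\<Sum>F\<in>T. \<Sum>G\<in>T. c F * c G * (\<Sum>s<N. \<Sum>t<N. ?val s t F G))"
    by (simp add: sum_distrib_left) (intro sum.cong refl; rule sum.swap)
  also have "\<dots> = real N * ((real N - 1) * ?Q + ?Q')"
    by (simp add: sum_diagonal_split algebra_simps sum_distrib_left sum.distrib sum_subtractf)
  finally show ?thesis
    using N by (simp add: zero_le_mult_iff)
qed

text \<open>Symmetry of the labeled connection matrix of the induced function, obtained by
  placing F and G into two different slots and using symmetry of B.\<close>

lemma flat_param_klab_prod_sym:
  assumes psd: "psd_on (flat_graphs m) B" and cons: "isolate_consistent m B"
    and F: "klabeled j F" and G: "klabeled j G" and m: "slot_bound j {F, G} 2 \<le> m"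
  shows "flat_param m B (klab_prod j F G) = flat_param m B (klab_prod j G F)"
proof -
  have T: "{F, G} \<subseteq> {F. klabeled j F}"
    using F G by auto
  have flat: "slot_graph j 2 m s H \<in> flat_graphs m" if "s < 2" "H \<in> {F, G}" for s H
    using slot_graph_flat[of j H "max_node {F, G}" s 2 m] max_node_bound[OF _ T] T m that
    unfolding slot_bound_def by blast
  have "flat_param m B (klab_prod j F G) = B (slot_graph j 2 m 0 F) (slot_graph j 2 m 1 G)"
    using flat_param_eq[OF cons flat[of 0 F] flat[of 1 G]
        isolate_equiv_sym[OF slot_product_distinct[of 0 2 1]]] by simp
  also have "\<dots> = B (slot_graph j 2 m 1 G) (slot_graph j 2 m 0 F)"
    using psd flat unfolding psd_on_def by simp
  also have "\<dots> = flat_param m B (klab_prod j G F)"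
    using flat_param_eq[OF cons flat[of 1 G] flat[of 0 F]
        isolate_equiv_sym[OF slot_product_distinct[of 1 2 0]]] by simp
  finally show ?thesis .
qed

section \<open>Admissible functions and the compactness argument\<close>

text \<open>The conditions at level m that the induced function of a flat extension B_m
  satisfies: isolate-indifference, agreement with A, and symmetry and the slot inequality
  for all labeled graphs small enough to fit into [m].\<close>

definition admissible :: "nat \<Rightarrow> (graph \<Rightarrow> graph \<Rightarrow> real) \<Rightarrow> nat \<Rightarrow> (graph \<Rightarrow> real) \<Rightarrow> bool" where
  "admissible k A m f \<longleftrightarrow>
     (\<forall>G H. isolate_equiv G H \<longrightarrow> f G = f H) \<and>
     (\<forall>F G. F \<in> flat_graphs k \<and> G \<in> flat_graphs k \<longrightarrow> f (flat_prod F G) = A F G) \<and>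
     (\<forall>j F G. klabeled j F \<and> klabeled j G \<and> slot_bound j {F, G} 2 \<le> m \<longrightarrow>
        f (klab_prod j F G) = f (klab_prod j G F)) \<and>
     (\<forall>j T c N. finite T \<and> T \<subseteq> {F. klabeled j F} \<and> 2 \<le> N \<and> slot_bound j T N \<le> m \<longrightarrow>
        0 \<le> (real N - 1) * (\<Sum>F\<in>T. \<Sum>G\<in>T. c F * c G * f (klab_prod j F G))
             + (\<Sum>F\<in>T. \<Sum>G\<in>T. c F * c G * f (overlay F G)))"

text \<open>Admissibility is a conjunction of conditions on finitely many values of f each, hence
  a closed condition in the product topology, and it becomes stronger as m grows.\<close>

lemma admissible_closed: "closed {f. admissible k A m f}"
  unfolding admissible_def
  by (intro closed_Collect_conj closed_Collect_all closed_Collect_imp open_Collect_const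
      closed_Collect_eq closed_Collect_le continuous_intros) simp_all

lemma admissible_antimono: "admissible k A n f \<Longrightarrow> m \<le> n \<Longrightarrow> admissible k A m f"
  unfolding admissible_def by (meson order_trans)

lemma flat_param_admissible:
  assumes "flat_extension k A m B" "k \<le> m"
  shows "admissible k A m (flat_param m B)"
proof -
  have psd: "psd_on (flat_graphs m) B" and cons: "isolate_consistent m B"
    using assms(1) by (auto simp: flat_extension_def)
  show ?thesis
    unfolding admissible_def
    using flat_param_isolate_equiv flat_param_extends[OF assms]
      flat_param_klab_prod_sym[OF psd cons] flat_param_slot_inequality[OF psd cons]
    by blast
qed

text \<open>A function admissible at every level is an isolate-indifferent, reflection positive
  graph parameter extending A; reflection positivity follows by letting N grow.\<close>

lemma admissible_limit:
  assumes adm: "\<And>m. admissible k A m f"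
  shows "graph_parameter f" "isolate_indifferent f" "reflection_positive f"
    "\<forall>F\<in>flat_graphs k. \<forall>G\<in>flat_graphs k. A F G = f (flat_prod F G)"
proof -
  have indiff: "f G = f H" if "isolate_equiv G H" for G H
    using adm[of 0] that unfolding admissible_def by blast
  then show "isolate_indifferent f"
    unfolding isolate_indifferent_def by blast
  show "graph_parameter f"
    unfolding graph_parameter_def using indiff graph_iso_imp_isolate_equiv by blast
  have "f (flat_prod F G) = A F G" if "F \<in> flat_graphs k" "G \<in> flat_graphs k" for F G
    using adm[of 0] that unfolding admissible_def by blast
  then show "\<forall>F\<in>flat_graphs k. \<forall>G\<in>flat_graphs k. A F G = f (flat_prod F G)"
    by simp
  show "reflection_positive f"
    unfolding reflection_positive_def psd_on_def
  proof (intro allI conjI ballI impI)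
    fix j F G
    assume "F \<in> {F. klabeled j F}" "G \<in> {F. klabeled j F}"
    then have "klabeled j F \<and> klabeled j G \<and> slot_bound j {F, G} 2 \<le> slot_bound j {F, G} 2"
      by simp
    then show "f (klab_prod j F G) = f (klab_prod j G F)"
      using adm[of "slot_bound j {F, G} 2"] unfolding admissible_def by blast
  next
    fix j T c
    assume "finite T \<and> T \<subseteq> {F. klabeled j F}"
    then have "\<forall>N\<ge>2. 0 \<le> (real N - 1) * (\<Sum>F\<in>T. \<Sum>G\<in>T. c F * c G * f (klab_prod j F G))
                          + (\<Sum>F\<in>T. \<Sum>G\<in>T. c F * c G * f (overlay F G))"
      using adm unfolding admissible_def by blast
    then show "0 \<le> (\<Sum>F\<in>T. \<Sum>G\<in>T. c F * c G * f (klab_prod j F G))"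
      by (rule nonneg_of_linear_bound)
  qed
qed

text \<open>Tychonoff: the real-valued functions on any type with values in a fixed closed
  interval form a compact set of the product topology.\<close>

lemma compact_function_box: "compact {f::'a \<Rightarrow> real. \<forall>x. f x \<in> {a..b}}"
proof -
  have "compactin (product_topology (\<lambda>_. euclidean) UNIV) (PiE UNIV (\<lambda>_::'a. {a..b::real}))"
    by (simp add: compactin_PiE)
  moreover have "PiE UNIV (\<lambda>_::'a. {a..b::real}) = {f. \<forall>x. f x \<in> {a..b}}"
    by (auto simp: PiE_UNIV_domain Pi_def)
  ultimately show ?thesis
    by (simp add: euclidean_product_topology)
qed

lemma compact_Int_decreasing_closed:
  fixes D :: "nat \<Rightarrow> 'a::topological_space set"
  assumes "compact S" "\<And>m. closed (D m)" "\<And>m n. m \<le> n \<Longrightarrow> D n \<subseteq> D m" "\<And>m. S \<inter> D m \<noteq> {}"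
  shows "S \<inter> (\<Inter>m. D m) \<noteq> {}"
proof (rule compact_imp_fip_image[OF assms(1)])
  fix I :: "nat set"
  assume "finite I"
  then have "D (Max (insert 0 I)) \<subseteq> D i" if "i \<in> I" for i
    using that by (intro assms(3)) simp
  then have "D (Max (insert 0 I)) \<subseteq> (\<Inter>i\<in>I. D i)"
    by blast
  then show "S \<inter> (\<Inter>i\<in>I. D i) \<noteq> {}"
    using assms(4)[of "Max (insert 0 I)"] by blast
qed (use assms(2) in simp)

lemma parameter_imp_flat_extension:
  assumes indiff: "isolate_indifferent f" and rp: "reflection_positive f"
    and ext: "\<forall>F\<in>flat_graphs k. \<forall>G\<in>flat_graphs k. A F G = f (flat_prod F G)"
    and "k \<le> m"
  shows "flat_extension k A m (\<lambda>F G. f (flat_prod F G))"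
proof -
  have wf: "wf_graph (flat_prod F G)" if "F \<in> flat_graphs n" "G \<in> flat_graphs n" for F G n
    using flat_prod_flat[OF that] by (simp add: flat_graphs_def)
  have labeled: "flat_graphs m \<subseteq> {F. klabeled m F}"
    by (auto simp: flat_graphs_def klabeled_def)
  have conn: "psd_on {F. klabeled m F} (\<lambda>F G. f (klab_prod m F G))"
    using rp by (simp add: reflection_positive_def)
  have flat_eq: "f (klab_prod m F G) = f (flat_prod F G)"
    if "F \<in> flat_graphs m" "G \<in> flat_graphs m" for F G
    using klab_prod_flat[OF that] by simp
  have "psd_on (flat_graphs m) (\<lambda>F G. f (flat_prod F G))"
    unfolding psd_on_def
  proof (intro conjI ballI allI impI)
    fix F G
    assume F: "F \<in> flat_graphs m" and G: "G \<in> flat_graphs m"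
    then have "F \<in> {F. klabeled m F}" "G \<in> {F. klabeled m F}"
      using labeled by auto
    then have "f (klab_prod m F G) = f (klab_prod m G F)"
      using conn unfolding psd_on_def by blast
    then show "f (flat_prod F G) = f (flat_prod G F)"
      using flat_eq F G by simp
  next
    fix T c
    assume T: "finite T \<and> T \<subseteq> flat_graphs m"
    then have "0 \<le> (\<Sum>F\<in>T. \<Sum>G\<in>T. c F * c G * f (klab_prod m F G))"
      using psd_on_quadratic_nonneg[OF conn] labeled by blast
    also have "\<dots> = (\<Sum>F\<in>T. \<Sum>G\<in>T. c F * c G * f (flat_prod F G))"
      using T flat_eq by (intro sum.cong refl) (auto simp: subset_iff)
    finally show "0 \<le> (\<Sum>F\<in>T. \<Sum>G\<in>T. c F * c G * f (flat_prod F G))" .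
  qed
  moreover have "isolate_consistent m (\<lambda>F G. f (flat_prod F G))"
    using indiff wf unfolding isolate_consistent_def isolate_indifferent_def by blast
  moreover have "f (flat_prod (add_isolated m F) (add_isolated m G)) = A F G"
    if "F \<in> flat_graphs k" "G \<in> flat_graphs k" for F G
    using indiff wf[OF add_isolated_flat add_isolated_flat] wf[OF that] that ext \<open>k \<le> m\<close>
      isolate_equiv_add_isolated unfolding isolate_indifferent_def by metis
  ultimately show ?thesis
    unfolding flat_extension_def by blast
qed

text \<open>Backward direction: the induced functions of the B_m all lie in the compact box
  [0, A(E,E)]^graphs, and the one of level n is admissible at every level m \<le> n; a common
  point of the admissible sets is the required parameter.\<close>

lemma flat_extensions_imp_parameter:
  assumes "\<forall>m\<ge>k. \<exists>B. flat_extension k A m B"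
  shows "\<exists>f. graph_parameter f \<and> isolate_indifferent f \<and> reflection_positive f \<and>
           (\<forall>F\<in>flat_graphs k. \<forall>G\<in>flat_graphs k. A F G = f (flat_prod F G))"
proof -
  obtain Bs where Bs: "\<And>m. k \<le> m \<Longrightarrow> flat_extension k A m (Bs m)"
    using assms by metis
  define S where "S = {f::graph \<Rightarrow> real. \<forall>x. f x \<in> {0..A ({1..k}, {}) ({1..k}, {})}}"
  define D where "D m = {f. admissible k A m f}" for m
  have "flat_param (m + k) (Bs (m + k)) \<in> S \<inter> D m" for m
    using flat_param_bounded[OF Bs[of "m + k"]]
      admissible_antimono[OF flat_param_admissible[OF Bs[of "m + k"]]]
    unfolding S_def D_def by simp
  then have "S \<inter> (\<Inter>m. D m) \<noteq> {}"
    using admissible_closed admissible_antimono unfolding S_def D_def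
    by (intro compact_Int_decreasing_closed compact_function_box) blast+
  then obtain f where "\<And>m. admissible k A m f"
    unfolding D_def by blast
  then show ?thesis
    using admissible_limit by blast
qed

theorem mainTheorem9:
  fixes k :: nat and A :: "graph \<Rightarrow> graph \<Rightarrow> real"
  assumes "\<forall>F\<in>flat_graphs k. \<forall>G\<in>flat_graphs k. A F G = A G F"
  shows "(\<exists>f. graph_parameter f \<and> isolate_indifferent f \<and> reflection_positive f \<and>
            (\<forall>F\<in>flat_graphs k. \<forall>G\<in>flat_graphs k. A F G = f (flat_prod F G)))
         \<longleftrightarrow>
         (\<forall>m\<ge>k. \<exists>B. psd_on (flat_graphs m) B \<and>
            (\<forall>F1\<in>flat_graphs m. \<forall>G1\<in>flat_graphs m. \<forall>F2\<in>flat_graphs m. \<forall>G2\<in>flat_graphs m.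
               isolate_equiv (flat_prod F1 G1) (flat_prod F2 G2) \<longrightarrow> B F1 G1 = B F2 G2) \<and>
            (\<forall>F\<in>flat_graphs k. \<forall>G\<in>flat_graphs k.
               B (add_isolated m F) (add_isolated m G) = A F G))"
proof -
  have "(\<exists>f. graph_parameter f \<and> isolate_indifferent f \<and> reflection_positive f \<and>
            (\<forall>F\<in>flat_graphs k. \<forall>G\<in>flat_graphs k. A F G = f (flat_prod F G)))
        \<longleftrightarrow> (\<forall>m\<ge>k. \<exists>B. flat_extension k A m B)"
    using parameter_imp_flat_extension flat_extensions_imp_parameter by blast
  then show ?thesis
    unfolding flat_extension_def isolate_consistent_def .
qed

end
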